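(* Let $f_0,f_1$ be probability densities on $\mathbb{R}$, $w(y;u)=f_1(y)^u f_0(y)^{1-u}$ and $k(u)=\int w(y;u)\,dy$. Let $u,v\in[0,1]$ with $u+v<1$ be such that the densities $\bar g_0=w(\cdot;u)/k(u)$ and $\bar g_1=w(\cdot;1-v)/k(1-v)$ satisfy $D(\bar g_0,f_0)=\varepsilon_0$ and $D(\bar g_1,f_1)=\varepsilon_1$. Then, with $\mathcal{G}_j=\{g_j: D(g_j,f_j)\le\varepsilon_j\}$, $$\bar g_0=\arg\max_{g_0\in\mathcal{G}_0}\mathrm{E}_{g_0}\Big[\ln\frac{\bar g_1}{\bar g_0}(Y)\Big],\qquad \bar g_1=\arg\min_{g_1\in\mathcal{G}_1}\mathrm{E}_{g_1}\Big[\ln\frac{\bar g_1}{\bar g_0}(Y)\Big].$$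
   Context: $D(g,f)=\int\ln(g/f)\,g\,dy$ is the Kullback–Leibler divergence; $\mathcal{G}_j$ ranges over probability densities; $\mathrm{E}_{g}$ denotes expectation with $Y\sim g$. *)

theory Defs
  imports "HOL-Analysis.Analysis"
begin

definition is_density :: "(real \<Rightarrow> real) \<Rightarrow> bool" where
  "is_density g \<longleftrightarrow> g \<in> borel_measurable lborel \<and> (\<forall>y. 0 \<le> g y)
      \<and> integrable lborel g \<and> (\<integral>y. g y \<partial>lborel) = 1"

text \<open>Kullback-Leibler divergence D(g,f) = int ln(g/f) g dy, with values in [0,\<infinity>]:
  it is \<infinity> unless g is absolutely continuous w.r.t. f and the integrand is integrable
  (its negative part is always integrable for densities). Convention 0 ln 0 = 0.\<close>
definition KL :: "(real \<Rightarrow> real) \<Rightarrow> (real \<Rightarrow> real) \<Rightarrow> ereal" where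
  "KL g f = (if (AE y in lborel. f y = 0 \<longrightarrow> g y = 0)
                \<and> integrable lborel (\<lambda>y. g y * ln (g y / f y))
             then ereal (\<integral>y. g y * ln (g y / f y) \<partial>lborel) else \<infinity>)"

definition KL_ball :: "(real \<Rightarrow> real) \<Rightarrow> real \<Rightarrow> (real \<Rightarrow> real) set" where
  "KL_ball f eps = {g. is_density g \<and> KL g f \<le> ereal eps}"

text \<open>w(y;u) = f1(y)^u f0(y)^(1-u), with the convention 0^0 = 1 at the endpoints.\<close>
definition geo_w :: "(real \<Rightarrow> real) \<Rightarrow> (real \<Rightarrow> real) \<Rightarrow> real \<Rightarrow> real \<Rightarrow> real" where
  "geo_w f0 f1 u y = (if u = 0 then f0 y else if u = 1 then f1 y
                      else f1 y powr u * f0 y powr (1 - u))"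

definition geo_k :: "(real \<Rightarrow> real) \<Rightarrow> (real \<Rightarrow> real) \<Rightarrow> real \<Rightarrow> real" where
  "geo_k f0 f1 u = (\<integral>y. geo_w f0 f1 u y \<partial>lborel)"

definition geo_g :: "(real \<Rightarrow> real) \<Rightarrow> (real \<Rightarrow> real) \<Rightarrow> real \<Rightarrow> real \<Rightarrow> real" where
  "geo_g f0 f1 u y = geo_w f0 f1 u y / geo_k f0 f1 u"

text \<open>Where both are positive it is
  the logarithm of the ratio; where one of the nominal densities vanishes we use the
  standard conventions ln(a/0) = \<infinity>, ln(0/b) = -\<infinity> for the ratio
  (f1/f0)^(1-u-v) underlying gbar1/gbar0; on {f0 = 0 = f1} (a null set for every
  density in either ball) the value is 0.\<close>
definition llr :: "(real \<Rightarrow> real) \<Rightarrow> (real \<Rightarrow> real) \<Rightarrow> real \<Rightarrow> real \<Rightarrow> real \<Rightarrow> ereal" where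
  "llr f0 f1 u v y =
     (if 0 < geo_g f0 f1 u y \<and> 0 < geo_g f0 f1 (1 - v) y
      then ereal (ln (geo_g f0 f1 (1 - v) y / geo_g f0 f1 u y))
      else if f0 y = 0 \<and> 0 < f1 y then \<infinity>
      else if f1 y = 0 \<and> 0 < f0 y then - \<infinity>
      else 0)"

definition exp_pos :: "(real \<Rightarrow> real) \<Rightarrow> (real \<Rightarrow> ereal) \<Rightarrow> ennreal" where
  "exp_pos g h = (\<integral>\<^sup>+y. ennreal (g y) * e2ennreal (max (h y) 0) \<partial>lborel)"

definition exp_neg :: "(real \<Rightarrow> real) \<Rightarrow> (real \<Rightarrow> ereal) \<Rightarrow> ennreal" where
  "exp_neg g h = (\<integral>\<^sup>+y. ennreal (g y) * e2ennreal (max (- h y) 0) \<partial>lborel)"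

definition exp_defined :: "(real \<Rightarrow> real) \<Rightarrow> (real \<Rightarrow> ereal) \<Rightarrow> bool" where
  "exp_defined g h \<longleftrightarrow> \<not> (exp_pos g h = \<infinity> \<and> exp_neg g h = \<infinity>)"

definition expect :: "(real \<Rightarrow> real) \<Rightarrow> (real \<Rightarrow> ereal) \<Rightarrow> ereal" where
  "expect g h = enn2ereal (exp_pos g h) - enn2ereal (exp_neg g h)"

end

theory Submission
  imports Defs
begin

text \<open>For \<open>u > 0\<close> the log-likelihood ratio \<open>h = ln (g\<^sub>1 / g\<^sub>0)\<close> equals \<open>A ln (g\<^sub>0 / f\<^sub>0) + C\<close> with
  \<open>A = (1 - u - v) / u > 0\<close>, i.e. \<open>g\<^sub>0 \<propto> f\<^sub>0 e\<^bsup>h/A\<^esup>\<close> is an exponential tilt of \<open>f\<^sub>0\<close>.  The Gibbs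
  variational inequality \<open>E\<^sub>g h \<le> A D(g, f\<^sub>0) + C\<close>, with equality only for \<open>g = g\<^sub>0\<close>, shows that over
  the ball \<open>D(g, f\<^sub>0) \<le> \<epsilon>\<^sub>0 = D(g\<^sub>0, f\<^sub>0)\<close> the expectation is maximal exactly at \<open>g\<^sub>0\<close>.  For \<open>u = 0\<close>
  we have \<open>g\<^sub>0 = f\<^sub>0\<close> and the ball is \<open>{f\<^sub>0}\<close>.  Exchanging \<open>f\<^sub>0, u\<close> with \<open>f\<^sub>1, v\<close> negates \<open>h\<close> and turns
  this into the minimality of \<open>g\<^sub>1\<close>.\<close>

section \<open>Expectations bounded by a pointwise inequality\<close>

lemma ennreal_mult_pos_part_le:
  fixes a s r :: real and x :: ereal
  assumes "0 \<le> a" "0 \<le> s" "ereal a * x + ereal s \<le> ereal r"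
  shows "ennreal a * e2ennreal (max x 0) \<le> ennreal r"
proof (cases "a = 0")
  case True then show ?thesis by simp
next
  case False
  then have a_pos: "0 < a" using assms by simp
  show ?thesis
  proof (cases x)
    case (real t)
    have lin: "t * a + s \<le> r" using assms real by (simp add: mult.commute)
    have pos_part: "ennreal a * e2ennreal (max x 0) = ennreal (a * max t 0)"
      using real a_pos by (simp add: max_def ennreal_mult e2ennreal_neg)
    show ?thesis
    proof (cases "t \<le> 0")
      case True then show ?thesis unfolding pos_part by simp
    next
      case False
      then show ?thesis unfolding pos_part using lin a_pos assms
        by (intro ennreal_leI) (auto simp: max_def algebra_simps)
    qed
  next
    case PInf
    then show ?thesis using assms a_pos by simp
  next
    case MInf
    then show ?thesis using a_pos by (simp add: e2ennreal_neg)
  qed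
qed

lemma ennreal_mult_parts_le:
  fixes a s r :: real and x :: ereal
  assumes "0 \<le> a" "0 \<le> s" "ereal a * x + ereal s \<le> ereal r"
  shows "ennreal a * e2ennreal (max x 0) + ennreal s + ennreal (- r)
         \<le> ennreal r + ennreal a * e2ennreal (max (- x) 0)"
proof (cases "a = 0")
  case True
  then have "s \<le> r" using assms by (simp add: zero_ereal_def[symmetric])
  then show ?thesis using True assms
    by (cases "r \<ge> 0") (auto simp: ennreal_neg ennreal_plus[symmetric] simp del: ennreal_plus)
next
  case False
  then have a_pos: "0 < a" using assms by simp
  show ?thesis
  proof (cases x)
    case (real t)
    have lin: "t * a + s \<le> r" using assms real by (simp add: mult.commute)
    have pos_part: "ennreal a * e2ennreal (max x 0) = ennreal (a * max t 0)"
      using real a_pos by (simp add: max_def ennreal_mult e2ennreal_neg)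
    have neg_part: "ennreal a * e2ennreal (max (-x) 0) = ennreal (a * max (-t) 0)"
      using real a_pos by (simp add: max_def ennreal_mult e2ennreal_neg)
    have "ennreal (a * max t 0) + ennreal s + ennreal (- r) = ennreal (a * max t 0 + s + max (-r) 0)"
      using a_pos assms by (simp add: ennreal_plus[symmetric] max_def ennreal_neg del: ennreal_plus)
    also have "\<dots> \<le> ennreal (max r 0 + a * max (-t) 0)"
      using lin a_pos by (intro ennreal_leI) (auto simp: max_def algebra_simps)
    also have "\<dots> = ennreal r + ennreal (a * max (-t) 0)"
      using a_pos by (cases "r \<ge> 0") (auto simp: ennreal_plus[symmetric] max_def ennreal_neg simp del: ennreal_plus)
    finally show ?thesis using pos_part neg_part by simp
  next
    case PInf
    then show ?thesis using assms a_pos by simp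
  next
    case MInf
    then show ?thesis using a_pos by (simp add: ennreal_mult_top)
  qed
qed

context
  fixes g S R :: "real \<Rightarrow> real" and h :: "real \<Rightarrow> ereal"
  assumes g_meas [measurable]: "g \<in> borel_measurable borel"
    and h_meas [measurable]: "h \<in> borel_measurable borel"
    and S_meas [measurable]: "S \<in> borel_measurable borel"
    and R_int: "integrable lborel R"
    and g_nonneg: "\<And>y. 0 \<le> g y" and S_nonneg: "\<And>y. 0 \<le> S y"
    and bound: "AE y in lborel. ereal (g y) * h y + ereal (S y) \<le> ereal (R y)"
begin

private lemma nn_integral_R_finite:
  "(\<integral>\<^sup>+y. ennreal (R y) \<partial>lborel) \<noteq> \<infinity>" "(\<integral>\<^sup>+y. ennreal (- R y) \<partial>lborel) \<noteq> \<infinity>"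
  using R_int unfolding real_integrable_def by (auto simp: top_unique less_top)

private lemma exp_pos_finite: "exp_pos g h \<noteq> \<infinity>"
proof -
  have "exp_pos g h \<le> (\<integral>\<^sup>+y. ennreal (R y) \<partial>lborel)"
    unfolding exp_pos_def using bound
    by (intro nn_integral_mono_AE) (elim eventually_mono, rule ennreal_mult_pos_part_le[OF g_nonneg S_nonneg])
  then show ?thesis using nn_integral_R_finite by (auto simp: top_unique)
qed

lemma exp_defined_of_bound: "exp_defined g h"
  using exp_pos_finite unfolding exp_defined_def by simp

private lemma exp_parts_le:
  "exp_pos g h + (\<integral>\<^sup>+y. ennreal (S y) \<partial>lborel) + (\<integral>\<^sup>+y. ennreal (- R y) \<partial>lborel)
     \<le> (\<integral>\<^sup>+y. ennreal (R y) \<partial>lborel) + exp_neg g h"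
proof -
  have [measurable]: "R \<in> borel_measurable borel" using R_int by auto
  have "exp_pos g h + (\<integral>\<^sup>+y. ennreal (S y) \<partial>lborel) + (\<integral>\<^sup>+y. ennreal (- R y) \<partial>lborel)
     = (\<integral>\<^sup>+y. ennreal (g y) * e2ennreal (max (h y) 0) + ennreal (S y) + ennreal (- R y) \<partial>lborel)"
    unfolding exp_pos_def by (simp add: nn_integral_add)
  also have "\<dots> \<le> (\<integral>\<^sup>+y. ennreal (R y) + ennreal (g y) * e2ennreal (max (- h y) 0) \<partial>lborel)"
    using bound by (intro nn_integral_mono_AE) (elim eventually_mono, rule ennreal_mult_parts_le[OF g_nonneg S_nonneg])
  also have "\<dots> = (\<integral>\<^sup>+y. ennreal (R y) \<partial>lborel) + exp_neg g h"
    unfolding exp_neg_def by (simp add: nn_integral_add)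
  finally show ?thesis .
qed

lemma expect_add_nn_integral_le:
  assumes "expect g h \<noteq> - \<infinity>"
  shows "expect g h + enn2ereal (\<integral>\<^sup>+y. ennreal (S y) \<partial>lborel) \<le> ereal (\<integral>y. R y \<partial>lborel)"
proof -
  obtain p where p: "exp_pos g h = ennreal p" "0 \<le> p"
    using exp_pos_finite by (cases "exp_pos g h") auto
  obtain n where n: "exp_neg g h = ennreal n" "0 \<le> n"
    using assms p unfolding expect_def by (cases "exp_neg g h") auto
  obtain rp where rp: "(\<integral>\<^sup>+y. ennreal (R y) \<partial>lborel) = ennreal rp" "0 \<le> rp"
    using nn_integral_R_finite(1) by (cases "\<integral>\<^sup>+y. ennreal (R y) \<partial>lborel") auto
  obtain rm where rm: "(\<integral>\<^sup>+y. ennreal (- R y) \<partial>lborel) = ennreal rm" "0 \<le> rm"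
    using nn_integral_R_finite(2) by (cases "\<integral>\<^sup>+y. ennreal (- R y) \<partial>lborel") auto
  note le = exp_parts_le[unfolded p n rp rm]
  then have "(\<integral>\<^sup>+y. ennreal (S y) \<partial>lborel) \<noteq> \<infinity>"
    using p n rp rm by (auto simp: top_unique ennreal_plus[symmetric] simp del: ennreal_plus)
  then obtain s where s: "(\<integral>\<^sup>+y. ennreal (S y) \<partial>lborel) = ennreal s" "0 \<le> s"
    by (cases "\<integral>\<^sup>+y. ennreal (S y) \<partial>lborel") auto
  have "p + s + rm \<le> rp + n"
    using le p n s rp rm by (simp add: s ennreal_plus[symmetric] del: ennreal_plus)
  moreover have "(\<integral>y. R y \<partial>lborel) = rp - rm"
    using real_lebesgue_integral_def[OF R_int] rp rm by simp
  ultimately show ?thesis unfolding expect_def p n s using p(2) n(2) s(2) by simp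
qed

lemma expect_le_integral: "expect g h \<le> ereal (\<integral>y. R y \<partial>lborel)"
proof (cases "expect g h = - \<infinity>")
  case False
  have "expect g h \<le> expect g h + enn2ereal (\<integral>\<^sup>+y. ennreal (S y) \<partial>lborel)"
    by (simp add: ereal_le_add_self)
  also have "\<dots> \<le> ereal (\<integral>y. R y \<partial>lborel)"
    using expect_add_nn_integral_le[OF False] .
  finally show ?thesis .
qed simp

end

lemma exp_pos_uminus: "exp_pos g (\<lambda>y. - h y) = exp_neg g h"
  and exp_neg_uminus: "exp_neg g (\<lambda>y. - h y) = exp_pos g h"
  unfolding exp_pos_def exp_neg_def by simp_all

lemma exp_defined_uminus: "exp_defined g (\<lambda>y. - h y) \<longleftrightarrow> exp_defined g h"
  unfolding exp_defined_def exp_pos_uminus exp_neg_uminus by auto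

lemma expect_uminus: "exp_defined g h \<Longrightarrow> expect g (\<lambda>y. - h y) = - expect g h"
  unfolding expect_def exp_pos_uminus exp_neg_uminus exp_defined_def
  by (cases "exp_pos g h"; cases "exp_neg g h") auto

lemma expect_eq_integral:
  fixes g R :: "real \<Rightarrow> real" and h :: "real \<Rightarrow> ereal"
  assumes g_meas: "g \<in> borel_measurable borel" and h_meas: "h \<in> borel_measurable borel"
    and R_int: "integrable lborel R" and g_nonneg: "\<And>y. 0 \<le> g y"
    and eq: "AE y in lborel. ereal (g y) * h y = ereal (R y)"
  shows "exp_defined g h" "expect g h = ereal (\<integral>y. R y \<partial>lborel)"
proof -
  have up: "AE y in lborel. ereal (g y) * h y + ereal 0 \<le> ereal (R y)"
    and down: "AE y in lborel. ereal (g y) * - h y + ereal 0 \<le> ereal (- R y)"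
    using eq by auto
  have zero_meas: "(\<lambda>_. 0::real) \<in> borel_measurable borel" and zero_nonneg: "\<And>y::real. (0::real) \<le> 0"
    by simp_all
  have uminus_h_meas: "(\<lambda>y. - h y) \<in> borel_measurable borel" using h_meas by measurable
  have uminus_R_int: "integrable lborel (\<lambda>y. - R y)" using R_int by simp
  show def: "exp_defined g h"
    by (rule exp_defined_of_bound[OF g_meas h_meas zero_meas R_int g_nonneg zero_nonneg up])
  have "expect g h \<le> ereal (\<integral>y. R y \<partial>lborel)"
    by (rule expect_le_integral[OF g_meas h_meas zero_meas R_int g_nonneg zero_nonneg up])
  moreover have "expect g (\<lambda>y. - h y) \<le> ereal (\<integral>y. - R y \<partial>lborel)"
    by (rule expect_le_integral[OF g_meas uminus_h_meas zero_meas uminus_R_int g_nonneg zero_nonneg down])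
  then have "- expect g h \<le> - ereal (\<integral>y. R y \<partial>lborel)"
    unfolding expect_uminus[OF def] by simp
  ultimately show "expect g h = ereal (\<integral>y. R y \<partial>lborel)"
    using ereal_minus_le_minus by (blast intro: antisym)
qed

lemma expect_cong_AE:
  assumes "AE y in lborel. g y = g' y"
  shows "expect g h = expect g' h"
proof -
  have "exp_pos g h = exp_pos g' h" unfolding exp_pos_def
    by (rule nn_integral_cong_AE) (use assms in auto)
  moreover have "exp_neg g h = exp_neg g' h" unfolding exp_neg_def
    by (rule nn_integral_cong_AE) (use assms in auto)
  ultimately show ?thesis unfolding expect_def by simp
qed

section \<open>Exponential tilting maximises the expected log-ratio over a KL ball\<close>

text \<open>The integrand of \<open>D(g, G)\<close> corrected by \<open>G - g\<close>, which makes it pointwise nonnegative; the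
  value \<open>x\<close> off the support of \<open>G\<close> (where the true integrand is \<open>+\<infinity>\<close>) keeps it positive there.\<close>
definition entropy_gap :: "real \<Rightarrow> real \<Rightarrow> real" where
  "entropy_gap x z = (if z = 0 then x else z - x + x * ln (x / z))"

lemma measurable_entropy_gap [measurable]:
  assumes [measurable]: "f \<in> borel_measurable M" "g \<in> borel_measurable M"
  shows "(\<lambda>y. entropy_gap (f y) (g y)) \<in> borel_measurable M"
  unfolding entropy_gap_def by measurable

lemma entropy_gap_nonneg_eq_0_iff:
  fixes x z :: real
  assumes "0 \<le> x" "0 \<le> z"
  shows "0 \<le> entropy_gap x z" "entropy_gap x z = 0 \<longleftrightarrow> x = z"
proof -
  have "0 \<le> entropy_gap x z \<and> (entropy_gap x z = 0 \<longleftrightarrow> x = z)"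
  proof (cases "0 < x \<and> 0 < z")
    case True
    have "x * ln (z / x) \<le> x * (z / x - 1)"
      using True by (intro mult_left_mono ln_le_minus_one) auto
    also have "\<dots> = z - x" using True by (simp add: right_diff_distrib)
    finally have le: "x * ln (z / x) \<le> z - x" .
    have eq: "x = z" if "x * ln (z / x) = z - x"
    proof -
      have "ln (z / x) = z / x - 1" using that True by (simp add: field_simps)
      then have "z / x = 1" using True by (intro ln_eq_minus_one) auto
      then show ?thesis using True by simp
    qed
    have "x * ln (x / z) = - (x * ln (z / x))" using True by (simp add: ln_div algebra_simps)
    then show ?thesis using True le eq unfolding entropy_gap_def by auto
  qed (use assms in \<open>auto simp: entropy_gap_def\<close>)
  then show "0 \<le> entropy_gap x z" "entropy_gap x z = 0 \<longleftrightarrow> x = z" by auto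
qed

lemma KL_le_ereal_D:
  assumes "KL g p \<le> ereal e"
  shows "AE y in lborel. p y = 0 \<longrightarrow> g y = 0" "integrable lborel (\<lambda>y. g y * ln (g y / p y))"
    "(\<integral>y. g y * ln (g y / p y) \<partial>lborel) \<le> e"
  using assms unfolding KL_def by (auto split: if_splits)

lemma KL_self: "KL p p = 0"
proof -
  have "(\<lambda>y. p y * ln (p y / p y)) = (\<lambda>y. 0)" by (rule ext) (case_tac "p y = 0", auto)
  then show ?thesis unfolding KL_def by (simp add: zero_ereal_def)
qed

lemma tilted_bound_pointwise:
  fixes x z P A C :: real and H :: ereal
  assumes "0 \<le> x" "0 \<le> z" "0 \<le> P" "0 < A" and "P = 0 \<Longrightarrow> x = 0"
    and tilt: "0 < z \<Longrightarrow> 0 < P \<and> H = ereal (A * ln (z / P) + C)"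
    and off_supp: "0 < P \<Longrightarrow> z = 0 \<Longrightarrow> H = - \<infinity>"
  shows "ereal x * H + ereal (A * entropy_gap x z) \<le> ereal (A * (x * ln (x / P)) + A * z - A * x + C * x)"
proof -
  consider "x = 0" | "0 < x" "z = 0" | "0 < x" "0 < z" using \<open>0 \<le> x\<close> \<open>0 \<le> z\<close> by fastforce
  then show ?thesis
  proof cases
    case 1
    then show ?thesis by (simp add: entropy_gap_def zero_ereal_def[symmetric])
  next
    case 2
    then have "0 < P" using assms(3,5) by (cases "P = 0") auto
    then show ?thesis using 2 off_supp by simp
  next
    case 3
    then have "0 < P" and H: "H = ereal (A * ln (z / P) + C)" using tilt by auto
    then have "x * (A * ln (z / P) + C) + A * (z - x + x * ln (x / z))
        = A * (x * ln (x / P)) + A * z - A * x + C * x"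
      using 3 by (simp add: ln_div algebra_simps)
    then show ?thesis using 3 H by (simp add: entropy_gap_def)
  qed
qed

definition is_argmax_expect :: "(real \<Rightarrow> real) set \<Rightarrow> (real \<Rightarrow> ereal) \<Rightarrow> (real \<Rightarrow> real) \<Rightarrow> bool" where
  "is_argmax_expect B h G \<longleftrightarrow> G \<in> B \<and> exp_defined G h
     \<and> (\<forall>g \<in> B. exp_defined g h \<longrightarrow> expect g h \<le> expect G h)
     \<and> (\<forall>g \<in> B. exp_defined g h \<and> expect g h = expect G h \<longrightarrow> (AE y in lborel. g y = G y))"

definition is_argmin_expect :: "(real \<Rightarrow> real) set \<Rightarrow> (real \<Rightarrow> ereal) \<Rightarrow> (real \<Rightarrow> real) \<Rightarrow> bool" where
  "is_argmin_expect B h G \<longleftrightarrow> G \<in> B \<and> exp_defined G h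
     \<and> (\<forall>g \<in> B. exp_defined g h \<longrightarrow> expect G h \<le> expect g h)
     \<and> (\<forall>g \<in> B. exp_defined g h \<and> expect g h = expect G h \<longrightarrow> (AE y in lborel. g y = G y))"

lemma is_argmin_expect_if_argmax_uminus:
  assumes "is_argmax_expect B (\<lambda>y. - h y) G"
  shows "is_argmin_expect B h G"
  using assms unfolding is_argmax_expect_def is_argmin_expect_def exp_defined_uminus
  by (auto simp: expect_uminus)

text \<open>If \<open>h = A ln (G / p) + C\<close> on the support of \<open>G\<close> and \<open>-\<infinity>\<close> elsewhere on that of \<open>p\<close>, then
  \<open>g h + A (G - g + g ln (g / G)) \<le> A g ln (g / p) + A (G - g) + C g\<close> pointwise, with equality
  for \<open>g = G\<close>; integrating, \<open>E\<^sub>g h \<le> A D(g, p) + C \<le> A D(G, p) + C = E\<^sub>G h\<close>.\<close>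
context
  fixes p G :: "real \<Rightarrow> real" and h :: "real \<Rightarrow> ereal" and A C eps :: real
  assumes p: "is_density p" and G: "is_density G" and KL_G: "KL G p = ereal eps"
    and A: "0 < A" and h_meas [measurable]: "h \<in> borel_measurable borel"
    and supp: "\<And>y. 0 < G y \<Longrightarrow> 0 < p y"
    and tilt: "\<And>y. 0 < G y \<Longrightarrow> h y = ereal (A * ln (G y / p y) + C)"
    and off_supp: "\<And>y. 0 < p y \<Longrightarrow> G y = 0 \<Longrightarrow> h y = - \<infinity>"
begin

private lemma integral_majorant:
  assumes g: "is_density g" and L_int: "integrable lborel (\<lambda>y. g y * ln (g y / p y))"
  shows "integrable lborel (\<lambda>y. A * (g y * ln (g y / p y)) + A * G y - A * g y + C * g y)"
    "(\<integral>y. A * (g y * ln (g y / p y)) + A * G y - A * g y + C * g y \<partial>lborel)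
      = A * (\<integral>y. g y * ln (g y / p y) \<partial>lborel) + C"
proof -
  have "integrable lborel g" "(\<integral>y. g y \<partial>lborel) = 1" "integrable lborel G" "(\<integral>y. G y \<partial>lborel) = 1"
    using g G unfolding is_density_def by auto
  then show "integrable lborel (\<lambda>y. A * (g y * ln (g y / p y)) + A * G y - A * g y + C * g y)"
    "(\<integral>y. A * (g y * ln (g y / p y)) + A * G y - A * g y + C * g y \<partial>lborel)
      = A * (\<integral>y. g y * ln (g y / p y) \<partial>lborel) + C"
    using L_int by (simp_all add: integral_add integral_diff)
qed

private lemma expect_tilted: "exp_defined G h" "expect G h = ereal (A * eps + C)"
proof -
  have G_meas: "G \<in> borel_measurable borel" and G_nonneg: "\<And>y. 0 \<le> G y"
    using G unfolding is_density_def by auto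
  have "ereal (G y) * h y = ereal (A * (G y * ln (G y / p y)) + A * G y - A * G y + C * G y)" for y
  proof (cases "G y = 0")
    case False
    then have "0 < G y" using G_nonneg[of y] by simp
    then show ?thesis using tilt[of y] by (simp add: algebra_simps)
  qed (simp add: zero_ereal_def[symmetric])
  then have eq: "AE y in lborel.
      ereal (G y) * h y = ereal (A * (G y * ln (G y / p y)) + A * G y - A * G y + C * G y)"
    by simp
  have "integrable lborel (\<lambda>y. G y * ln (G y / p y))" "(\<integral>y. G y * ln (G y / p y) \<partial>lborel) = eps"
    using KL_G unfolding KL_def by (auto split: if_splits)
  note majorant = integral_majorant[OF G this(1)] this(2)
  show "exp_defined G h" using expect_eq_integral(1)[OF G_meas h_meas majorant(1) G_nonneg eq] .
  show "expect G h = ereal (A * eps + C)"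
    using expect_eq_integral(2)[OF G_meas h_meas majorant(1) G_nonneg eq] majorant(2,3) by simp
qed

private lemma expect_add_gap_le:
  assumes "g \<in> KL_ball p eps"
  shows "expect g h \<le> expect G h"
    and "expect g h \<noteq> - \<infinity> \<Longrightarrow>
      expect g h + enn2ereal (\<integral>\<^sup>+y. ennreal (A * entropy_gap (g y) (G y)) \<partial>lborel) \<le> expect G h"
proof -
  have g: "is_density g" and "KL g p \<le> ereal eps" using assms unfolding KL_ball_def by auto
  then have g_meas [measurable]: "g \<in> borel_measurable borel" and g_nonneg: "\<And>y. 0 \<le> g y"
    unfolding is_density_def by auto
  have [measurable]: "G \<in> borel_measurable borel" and G_nonneg: "\<And>y. 0 \<le> G y"
    and p_nonneg: "\<And>y. 0 \<le> p y"
    using p G unfolding is_density_def by auto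
  note KL_g = KL_le_ereal_D[OF \<open>KL g p \<le> ereal eps\<close>]
  note majorant = integral_majorant[OF g KL_g(2)]
  have majorant_le: "ereal (\<integral>y. A * (g y * ln (g y / p y)) + A * G y - A * g y + C * g y \<partial>lborel) \<le> expect G h"
    using majorant(2) KL_g(3) A expect_tilted(2) by simp
  have gap_meas: "(\<lambda>y. A * entropy_gap (g y) (G y)) \<in> borel_measurable borel" by measurable
  have gap_nonneg: "\<And>y. 0 \<le> A * entropy_gap (g y) (G y)"
    using A g_nonneg G_nonneg entropy_gap_nonneg_eq_0_iff by simp
  have bound: "AE y in lborel. ereal (g y) * h y + ereal (A * entropy_gap (g y) (G y))
      \<le> ereal (A * (g y * ln (g y / p y)) + A * G y - A * g y + C * g y)"
    using KL_g(1)
  proof eventually_elim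
    case (elim y)
    show ?case
      using g_nonneg[of y] G_nonneg[of y] p_nonneg[of y] A elim supp[of y] tilt[of y] off_supp[of y]
      by (intro tilted_bound_pointwise) auto
  qed
  show "expect g h \<le> expect G h"
    using expect_le_integral[OF g_meas h_meas gap_meas majorant(1) g_nonneg gap_nonneg bound] majorant_le
    by (rule order_trans)
  show "expect g h + enn2ereal (\<integral>\<^sup>+y. ennreal (A * entropy_gap (g y) (G y)) \<partial>lborel) \<le> expect G h"
    if "expect g h \<noteq> - \<infinity>"
    using expect_add_nn_integral_le[OF g_meas h_meas gap_meas majorant(1) g_nonneg gap_nonneg bound that]
      majorant_le
    by (rule order_trans)
qed

lemma tilted_is_argmax_expect: "is_argmax_expect (KL_ball p eps) h G"
proof -
  have "AE y in lborel. g y = G y" if g: "g \<in> KL_ball p eps" and eq: "expect g h = expect G h" for g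
  proof -
    have [measurable]: "g \<in> borel_measurable borel" "G \<in> borel_measurable borel"
      and g_nonneg: "\<And>y. 0 \<le> g y" and G_nonneg: "\<And>y. 0 \<le> G y"
      using g G unfolding KL_ball_def is_density_def by auto
    have "ereal (A * eps + C) + enn2ereal (\<integral>\<^sup>+y. ennreal (A * entropy_gap (g y) (G y)) \<partial>lborel)
        \<le> ereal (A * eps + C)"
      using expect_add_gap_le(2)[OF g] expect_tilted(2) unfolding eq by simp
    then have "(\<integral>\<^sup>+y. ennreal (A * entropy_gap (g y) (G y)) \<partial>lborel) = 0"
      by (cases "\<integral>\<^sup>+y. ennreal (A * entropy_gap (g y) (G y)) \<partial>lborel") auto
    then have "AE y in lborel. A * entropy_gap (g y) (G y) = 0"
      using A g_nonneg G_nonneg entropy_gap_nonneg_eq_0_iff(1)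
      by (subst (asm) nn_integral_0_iff_AE) auto
    then show ?thesis
      using A g_nonneg G_nonneg entropy_gap_nonneg_eq_0_iff(2) by (auto elim!: eventually_mono)
  qed
  moreover have "G \<in> KL_ball p eps" using G KL_G unfolding KL_ball_def by simp
  ultimately show ?thesis
    using expect_tilted(1) expect_add_gap_le(1) unfolding is_argmax_expect_def by blast
qed

end

lemma KL_ball_0_AE_eq:
  assumes p: "is_density p" and g: "g \<in> KL_ball p 0"
  shows "AE y in lborel. g y = p y"
proof -
  have "is_argmax_expect (KL_ball p 0) (\<lambda>_. 0) p"
    using p KL_self by (intro tilted_is_argmax_expect[where A = 1 and C = 0]) (auto simp: zero_ereal_def)
  moreover have "exp_defined f (\<lambda>_. 0) \<and> expect f (\<lambda>_. 0) = 0" for f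
    by (simp add: exp_defined_def expect_def exp_pos_def exp_neg_def e2ennreal_neg)
  ultimately show ?thesis using g unfolding is_argmax_expect_def by auto
qed

section \<open>The geometric mixtures\<close>

lemma geo_w_nonneg: "(\<And>y. 0 \<le> p y) \<Longrightarrow> (\<And>y. 0 \<le> q y) \<Longrightarrow> 0 \<le> geo_w p q t y"
  unfolding geo_w_def by auto

lemma measurable_geo_w [measurable]:
  assumes [measurable]: "p \<in> borel_measurable borel" "q \<in> borel_measurable borel"
  shows "geo_w p q t \<in> borel_measurable borel"
  unfolding geo_w_def[abs_def] by measurable

lemma measurable_geo_g [measurable]:
  assumes [measurable]: "p \<in> borel_measurable borel" "q \<in> borel_measurable borel"
  shows "geo_g p q t \<in> borel_measurable borel"
  unfolding geo_g_def[abs_def] by measurable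

lemma measurable_llr [measurable]:
  assumes [measurable]: "p \<in> borel_measurable borel" "q \<in> borel_measurable borel"
  shows "llr p q u v \<in> borel_measurable borel"
  unfolding llr_def[abs_def] by measurable

lemma geo_w_eq_0_if_left_eq_0: "t < 1 \<Longrightarrow> p y = 0 \<Longrightarrow> geo_w p q t y = 0"
  and geo_w_eq_0_if_right_eq_0: "0 < t \<Longrightarrow> q y = 0 \<Longrightarrow> geo_w p q t y = 0"
  unfolding geo_w_def by auto

lemma is_density_geo_g:
  assumes p: "is_density p" and q: "is_density q" and k: "0 < geo_k p q t"
  shows "is_density (geo_g p q t)"
proof -
  have [measurable]: "p \<in> borel_measurable borel" "q \<in> borel_measurable borel"
    using p q unfolding is_density_def by auto
  have int: "integrable lborel (geo_w p q t)"
    using k unfolding geo_k_def using not_integrable_integral_eq by fastforce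
  then show ?thesis unfolding is_density_def
  proof (intro conjI allI)
    show "geo_g p q t \<in> borel_measurable lborel" by measurable
    show "0 \<le> geo_g p q t y" for y
      using geo_w_nonneg[of p q] p q k unfolding geo_g_def is_density_def by auto
    show "integrable lborel (geo_g p q t)" unfolding geo_g_def using int by simp
    show "(\<integral>y. geo_g p q t y \<partial>lborel) = 1" unfolding geo_g_def using k unfolding geo_k_def by simp
  qed
qed

lemma geo_k_0: "is_density p \<Longrightarrow> geo_k p q 0 = 1"
  unfolding is_density_def geo_k_def geo_w_def by simp

lemma geo_g_0: "is_density p \<Longrightarrow> geo_g p q 0 = p"
  using geo_k_0[of p q] unfolding geo_g_def[abs_def] geo_w_def by simp

lemma ln_geo_g:
  assumes "0 < p y" "0 < q y" "0 \<le> t" "t \<le> 1" "0 < geo_k p q t"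
  shows "0 < geo_g p q t y" "ln (geo_g p q t y) = t * ln (q y) + (1 - t) * ln (p y) - ln (geo_k p q t)"
proof -
  have w: "geo_w p q t y = q y powr t * p y powr (1 - t)"
    using assms unfolding geo_w_def by auto
  show "0 < geo_g p q t y" using assms unfolding geo_g_def w by simp
  show "ln (geo_g p q t y) = t * ln (q y) + (1 - t) * ln (p y) - ln (geo_k p q t)"
    using assms unfolding geo_g_def w by (simp add: ln_div ln_mult ln_powr)
qed

lemma llr_eq_if_pos:
  assumes "0 \<le> u" "0 \<le> v" "u + v < 1" "0 < geo_k p q u" "0 < geo_k p q (1 - v)"
    and "0 < p y" "0 < q y"
  shows "llr p q u v y
    = ereal ((1 - u - v) * (ln (q y) - ln (p y)) + (ln (geo_k p q u) - ln (geo_k p q (1 - v))))"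
proof -
  note g_u = ln_geo_g[of p y q u] and g_v = ln_geo_g[of p y q "1 - v"]
  have "llr p q u v y = ereal (ln (geo_g p q (1 - v) y) - ln (geo_g p q u y))"
    using assms g_u g_v unfolding llr_def by (simp add: ln_div)
  then show ?thesis using assms g_u g_v by (simp add: algebra_simps)
qed

lemma llr_eq_minf: "v < 1 \<Longrightarrow> 0 < p y \<Longrightarrow> q y = 0 \<Longrightarrow> llr p q u v y = - \<infinity>"
  unfolding llr_def geo_g_def using geo_w_eq_0_if_right_eq_0[of "1 - v" q y p] by simp

text \<open>Here \<open>ln (g\<^sub>u / f\<^sub>0) = u ln (f\<^sub>1 / f\<^sub>0) - ln k(u)\<close>, while the log-ratio is
  \<open>(1 - u - v) ln (f\<^sub>1 / f\<^sub>0)\<close> up to a constant.\<close>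
lemma geo_g_is_argmax_expect_pos:
  assumes p: "is_density p" and q: "is_density q"
    and u: "0 < u" and v: "0 \<le> v" and uv: "u + v < 1"
    and k_u: "0 < geo_k p q u" and k_v: "0 < geo_k p q (1 - v)"
    and KL_u: "KL (geo_g p q u) p = ereal eps"
  shows "is_argmax_expect (KL_ball p eps) (llr p q u v) (geo_g p q u)"
proof -
  have [measurable]: "p \<in> borel_measurable borel" "q \<in> borel_measurable borel"
    and p_nonneg: "\<And>y. 0 \<le> p y" and q_nonneg: "\<And>y. 0 \<le> q y"
    using p q unfolding is_density_def by auto
  define A where "A = (1 - u - v) / u"
  define C where "C = A * ln (geo_k p q u) + (ln (geo_k p q u) - ln (geo_k p q (1 - v)))"
  have Au: "A * u = 1 - u - v" unfolding A_def using u by simp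
  have supp: "0 < p y \<and> 0 < q y" if "0 < geo_g p q u y" for y
    using that p_nonneg[of y] q_nonneg[of y] u uv v
      geo_w_eq_0_if_left_eq_0[of u p y q] geo_w_eq_0_if_right_eq_0[of u q y p]
    unfolding geo_g_def by (auto simp: less_le)
  show ?thesis
  proof (rule tilted_is_argmax_expect[OF p is_density_geo_g[OF p q k_u] KL_u])
    show "0 < A" unfolding A_def using u uv by simp
    show "llr p q u v \<in> borel_measurable borel" by measurable
    show "0 < geo_g p q u y \<Longrightarrow> 0 < p y" for y using supp by blast
    show "llr p q u v y = ereal (A * ln (geo_g p q u y / p y) + C)" if "0 < geo_g p q u y" for y
    proof -
      have ln_ratio: "ln (geo_g p q u y / p y) = u * (ln (q y) - ln (p y)) - ln (geo_k p q u)"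
        using that supp[OF that] ln_geo_g[of p y q u] u uv v k_u by (simp add: ln_div algebra_simps)
      have "A * ln (geo_g p q u y / p y) + C
          = (A * u) * (ln (q y) - ln (p y)) + (ln (geo_k p q u) - ln (geo_k p q (1 - v)))"
        unfolding ln_ratio C_def by (simp add: algebra_simps)
      then show ?thesis
        using llr_eq_if_pos[OF _ v uv k_u k_v] supp[OF that] u unfolding Au by simp
    qed
    show "llr p q u v y = - \<infinity>" if "0 < p y" "geo_g p q u y = 0" for y
    proof -
      have "q y = 0"
        using that ln_geo_g(1)[of p y q u] q_nonneg[of y] u uv v k_u by (auto simp: less_le)
      then show ?thesis using llr_eq_minf[of v p y q u] that u uv by simp
    qed
  qed
qed

text \<open>For \<open>u = 0\<close> the ball is \<open>{f\<^sub>0}\<close> up to null sets, and the only content is that \<open>E\<^sub>f\<^sub>0\<close> of the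
  log-ratio is defined: \<open>f\<^sub>0 ln (f\<^sub>1 / f\<^sub>0) \<le> f\<^sub>1 - f\<^sub>0\<close> bounds its positive part.\<close>
lemma geo_g_0_is_argmax_expect:
  assumes p: "is_density p" and q: "is_density q" and v: "0 \<le> v" "v < 1"
    and k_v: "0 < geo_k p q (1 - v)" and KL_0: "KL (geo_g p q 0) p = ereal eps"
  shows "is_argmax_expect (KL_ball p eps) (llr p q 0 v) (geo_g p q 0)"
proof -
  have [measurable]: "p \<in> borel_measurable borel" "q \<in> borel_measurable borel"
    and p_nonneg: "\<And>y. 0 \<le> p y" and q_nonneg: "\<And>y. 0 \<le> q y"
    and "integrable lborel p" "integrable lborel q"
    using p q unfolding is_density_def by auto
  have G: "geo_g p q 0 = p" by (rule geo_g_0[OF p])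
  have eps: "eps = 0" using KL_0 KL_self[of p] unfolding G by (simp add: zero_ereal_def)
  have k_0: "0 < geo_k p q 0" using geo_k_0[OF p] by simp
  define c where "c = ln (geo_k p q 0) - ln (geo_k p q (1 - v))"
  define R where "R y = (1 - v) * (q y - p y) + c * p y" for y
  have "ereal (p y) * llr p q 0 v y + ereal 0 \<le> ereal (R y)" for y
  proof -
    consider "p y = 0" | "0 < p y" "q y = 0" | "0 < p y" "0 < q y"
      using p_nonneg[of y] q_nonneg[of y] by force
    then show ?thesis
    proof cases
      case 1
      then show ?thesis using q_nonneg[of y] v by (simp add: R_def zero_ereal_def[symmetric])
    next
      case 2
      then show ?thesis using llr_eq_minf[of v p y q 0] v by simp
    next
      case 3
      have "p y * (ln (q y) - ln (p y)) \<le> q y - p y"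
        using entropy_gap_nonneg_eq_0_iff(1)[of "p y" "q y"] 3 by (simp add: entropy_gap_def ln_div algebra_simps)
      then have "(1 - v) * (p y * (ln (q y) - ln (p y))) \<le> (1 - v) * (q y - p y)"
        using v by (intro mult_left_mono) auto
      then show ?thesis
        using llr_eq_if_pos[of 0 v p q y] 3 v k_0 k_v by (simp add: R_def c_def algebra_simps)
    qed
  qed
  then have "AE y in lborel. ereal (p y) * llr p q 0 v y + ereal 0 \<le> ereal (R y)" by simp
  moreover have "integrable lborel R"
    unfolding R_def[abs_def] using \<open>integrable lborel p\<close> \<open>integrable lborel q\<close> by simp
  ultimately have defined: "exp_defined p (llr p q 0 v)"
    using p_nonneg by (intro exp_defined_of_bound[where S = "\<lambda>_. 0"]) simp_all
  have same: "expect g (llr p q 0 v) = expect p (llr p q 0 v)" if "g \<in> KL_ball p 0" for g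
    using expect_cong_AE[OF KL_ball_0_AE_eq[OF p that]] .
  show ?thesis unfolding is_argmax_expect_def G eps
  proof (intro conjI ballI impI)
    show "p \<in> KL_ball p 0" using p KL_self[of p] by (simp add: KL_ball_def zero_ereal_def)
    show "exp_defined p (llr p q 0 v)" by (rule defined)
    show "expect g (llr p q 0 v) \<le> expect p (llr p q 0 v)" if "g \<in> KL_ball p 0" for g
      using same[OF that] by simp
    show "AE y in lborel. g y = p y" if "g \<in> KL_ball p 0" for g
      using KL_ball_0_AE_eq[OF p that] .
  qed
qed

lemma geo_g_is_argmax_expect:
  assumes "is_density p" "is_density q" "0 \<le> u" "0 \<le> v" "u + v < 1"
    and "0 < geo_k p q u" "0 < geo_k p q (1 - v)" "KL (geo_g p q u) p = ereal eps"
  shows "is_argmax_expect (KL_ball p eps) (llr p q u v) (geo_g p q u)"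
proof (cases "u = 0")
  case True
  then show ?thesis using assms geo_g_0_is_argmax_expect[of p q v] by simp
next
  case False
  then show ?thesis using assms geo_g_is_argmax_expect_pos[of p q u v] by simp
qed

lemma geo_w_swap: "geo_w q p t = geo_w p q (1 - t)"
  unfolding geo_w_def by (rule ext) (simp add: mult.commute)

lemma geo_k_swap: "geo_k q p t = geo_k p q (1 - t)"
  unfolding geo_k_def by (subst geo_w_swap) (rule refl)

lemma geo_g_swap: "geo_g q p t = geo_g p q (1 - t)"
  unfolding geo_g_def[abs_def] by (subst geo_w_swap, subst geo_k_swap) (rule refl)

lemma llr_swap: "llr q p v u = (\<lambda>y. - llr p q u v y)"
proof (rule ext)
  fix y
  have "geo_g q p v = geo_g p q (1 - v)" "geo_g q p (1 - u) = geo_g p q u"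
    using geo_g_swap[of q p v] geo_g_swap[of q p "1 - u"] by simp_all
  then show "llr q p v u y = - llr p q u v y" unfolding llr_def by (auto simp: ln_div)
qed

theorem mainTheorem4:
  fixes f0 f1 :: "real \<Rightarrow> real" and u v eps0 eps1 :: real
  assumes f0: "is_density f0" and f1: "is_density f1"
    and u: "0 \<le> u" "u \<le> 1" and v: "0 \<le> v" "v \<le> 1" and uv: "u + v < 1"
    and k0: "0 < geo_k f0 f1 u" and k1: "0 < geo_k f0 f1 (1 - v)"
    and D0: "KL (geo_g f0 f1 u) f0 = ereal eps0"
    and D1: "KL (geo_g f0 f1 (1 - v)) f1 = ereal eps1"
  shows
    "geo_g f0 f1 u \<in> KL_ball f0 eps0
     \<and> exp_defined (geo_g f0 f1 u) (llr f0 f1 u v)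
     \<and> (\<forall>g0 \<in> KL_ball f0 eps0. exp_defined g0 (llr f0 f1 u v) \<longrightarrow>
          expect g0 (llr f0 f1 u v) \<le> expect (geo_g f0 f1 u) (llr f0 f1 u v))
     \<and> (\<forall>g0 \<in> KL_ball f0 eps0. exp_defined g0 (llr f0 f1 u v) \<and>
          expect g0 (llr f0 f1 u v) = expect (geo_g f0 f1 u) (llr f0 f1 u v) \<longrightarrow>
          (AE y in lborel. g0 y = geo_g f0 f1 u y))
     \<and> geo_g f0 f1 (1 - v) \<in> KL_ball f1 eps1
     \<and> exp_defined (geo_g f0 f1 (1 - v)) (llr f0 f1 u v)
     \<and> (\<forall>g1 \<in> KL_ball f1 eps1. exp_defined g1 (llr f0 f1 u v) \<longrightarrow>
          expect (geo_g f0 f1 (1 - v)) (llr f0 f1 u v) \<le> expect g1 (llr f0 f1 u v))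
     \<and> (\<forall>g1 \<in> KL_ball f1 eps1. exp_defined g1 (llr f0 f1 u v) \<and>
          expect g1 (llr f0 f1 u v) = expect (geo_g f0 f1 (1 - v)) (llr f0 f1 u v) \<longrightarrow>
          (AE y in lborel. g1 y = geo_g f0 f1 (1 - v) y))"
proof -
  have max: "is_argmax_expect (KL_ball f0 eps0) (llr f0 f1 u v) (geo_g f0 f1 u)"
    using geo_g_is_argmax_expect[OF f0 f1 u(1) v(1) uv k0 k1 D0] .
  have "0 < geo_k f1 f0 v" "0 < geo_k f1 f0 (1 - u)"
    using k0 k1 geo_k_swap[of f1 f0 v] geo_k_swap[of f1 f0 "1 - u"] by simp_all
  then have "is_argmax_expect (KL_ball f1 eps1) (llr f1 f0 v u) (geo_g f1 f0 v)"
    using geo_g_is_argmax_expect[OF f1 f0 v(1) u(1)] uv D1 geo_g_swap[of f1 f0 v] by simp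
  then have "is_argmin_expect (KL_ball f1 eps1) (llr f0 f1 u v) (geo_g f0 f1 (1 - v))"
    unfolding llr_swap[of f1 f0 v u] geo_g_swap[of f1 f0 v] by (rule is_argmin_expect_if_argmax_uminus)
  with max show ?thesis unfolding is_argmax_expect_def is_argmin_expect_def by blast
qed

end
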